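(* Let $\mathcal{G}$ be a simple temporal clique and let $u,v$ be distinct vertices. If $\{u,v\}=e^-(v)$, then for every vertex $x\notin\{u,v\}$ there is a journey from $u$ to $x$ whose first edge is $\{u,v\}$ (i.e. $u$ can reach all vertices through $v$). Symmetrically, if $u,w$ are distinct vertices with $\{u,w\}=e^+(w)$, then for every vertex $x\notin\{u,w\}$ there is a journey from $x$ to $u$ whose last edge is $\{w,u\}$ (i.e. all vertices can reach $u$ through $w$).
   Context: A simple temporal clique is a pair $\mathcal{G}=(G,\lambda)$ where $G=(V,E)$ is the complete graph on a finite vertex set $V$ and $\lambda:E\to\mathbb{N}$ assigns to each edge a single integer label such that any two distinct edges sharing an endpoint have different labels. A journey from $x$ to $y$ is a sequence of vertices $x=u_0,u_1,\dots,u_k=y$ ($k\ge1$) with $\lambda(\{u_{i-1},u_i\})<\lambda(\{u_i,u_{i+1}\})$ for all $1\le i<k$; its first edge is $\{u_0,u_1\}$ and its last edge is $\{u_{k-1},u_k\}$. For a vertex $v$, $e^-(v)$ (resp. $e^+(v)$) denotes the edge incident to $v$ with the smallest (resp. largest) label. *)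

theory Defs
  imports Main
begin

definition simple_temporal_clique :: "'v set \<Rightarrow> ('v set \<Rightarrow> nat) \<Rightarrow> bool" where
  "simple_temporal_clique V lam \<longleftrightarrow> finite V \<and>
     (\<forall>x\<in>V. \<forall>y\<in>V. \<forall>z\<in>V. x \<noteq> y \<and> x \<noteq> z \<and> y \<noteq> z \<longrightarrow> lam {x,y} \<noteq> lam {x,z})"

definition journey :: "'v set \<Rightarrow> ('v set \<Rightarrow> nat) \<Rightarrow> 'v list \<Rightarrow> 'v \<Rightarrow> 'v \<Rightarrow> bool" where
  "journey V lam p x y \<longleftrightarrow> length p \<ge> 2 \<and> set p \<subseteq> V \<and> hd p = x \<and> last p = y \<and>
     (\<forall>i. Suc i < length p \<longrightarrow> p ! i \<noteq> p ! Suc i) \<and>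
     (\<forall>i. Suc (Suc i) < length p \<longrightarrow>
        lam {p ! i, p ! Suc i} < lam {p ! Suc i, p ! Suc (Suc i)})"

definition first_edge :: "'v list \<Rightarrow> 'v set" where
  "first_edge p = {p ! 0, p ! 1}"

definition last_edge :: "'v list \<Rightarrow> 'v set" where
  "last_edge p = {p ! (length p - 2), p ! (length p - 1)}"

definition e_minus :: "'v set \<Rightarrow> ('v set \<Rightarrow> nat) \<Rightarrow> 'v \<Rightarrow> 'v set" where
  "e_minus V lam v = {v, ARG_MIN (\<lambda>w. lam {v,w}) w. w \<in> V \<and> w \<noteq> v}"

definition e_plus :: "'v set \<Rightarrow> ('v set \<Rightarrow> nat) \<Rightarrow> 'v \<Rightarrow> 'v set" where
  "e_plus V lam v = {v, ARG_MAX (\<lambda>w. lam {v,w}) w. w \<in> V \<and> w \<noteq> v}"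

end

theory Submission
  imports Defs
begin

text \<open>If \<open>{u,v} = e\<^sup>-(v)\<close>, every other edge \<open>{v,x}\<close> has a strictly larger label (labels at \<open>v\<close>
  are distinct), so \<open>u, v, x\<close> is a journey; dually, \<open>x, w, u\<close> is a journey when \<open>{u,w} = e\<^sup>+(w)\<close>.\<close>

lemma e_minus_label_le:
  assumes "u \<in> V" "u \<noteq> v" "{u,v} = e_minus V lam v" "x \<in> V" "x \<noteq> v"
  shows "lam {v,u} \<le> lam {v,x}"
proof -
  define m where "m = (ARG_MIN (\<lambda>w. lam {v,w}) w. w \<in> V \<and> w \<noteq> v)"
  have m: "m \<in> V \<and> m \<noteq> v" and m_min: "\<And>y. y \<in> V \<Longrightarrow> y \<noteq> v \<Longrightarrow> lam {v,m} \<le> lam {v,y}"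
    unfolding m_def
    using arg_min_nat_lemma[of "\<lambda>w. w \<in> V \<and> w \<noteq> v" u "\<lambda>w. lam {v,w}"] assms(1,2) by blast+
  have "{u,v} = {v,m}" using assms(3) unfolding e_minus_def m_def by simp
  then have "m = u" using m assms(2) by (auto simp: doubleton_eq_iff)
  then show ?thesis using m_min assms(4,5) by blast
qed

lemma e_plus_label_ge:
  assumes "finite V" "u \<in> V" "u \<noteq> w" "{u,w} = e_plus V lam w" "x \<in> V" "x \<noteq> w"
  shows "lam {w,x} \<le> lam {w,u}"
proof -
  define m where "m = (ARG_MAX (\<lambda>y. lam {w,y}) y. y \<in> V \<and> y \<noteq> w)"
  have bounded: "\<forall>y. y \<in> V \<and> y \<noteq> w \<longrightarrow> lam {w,y} < Suc (Max ((\<lambda>y. lam {w,y}) ` V))"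
    using assms(1) by (simp add: le_imp_less_Suc)
  have m: "m \<in> V \<and> m \<noteq> w" and m_max: "\<And>y. y \<in> V \<Longrightarrow> y \<noteq> w \<Longrightarrow> lam {w,y} \<le> lam {w,m}"
    unfolding m_def using arg_max_nat_lemma[OF _ bounded, of u] assms(2,3) by blast+
  have "{u,w} = {w,m}" using assms(4) unfolding e_plus_def m_def by simp
  then have "m = u" using m assms(3) by (auto simp: doubleton_eq_iff)
  then show ?thesis using m_max assms(5,6) by blast
qed

lemma simple_temporal_clique_labels_distinct:
  assumes "simple_temporal_clique V lam" "v \<in> V" "u \<in> V" "x \<in> V" "u \<noteq> v" "x \<noteq> v" "x \<noteq> u"
  shows "lam {v,u} \<noteq> lam {v,x}"
proof -
  have "\<forall>a\<in>V. \<forall>b\<in>V. \<forall>c\<in>V. a \<noteq> b \<and> a \<noteq> c \<and> b \<noteq> c \<longrightarrow> lam {a,b} \<noteq> lam {a,c}"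
    using assms(1) unfolding simple_temporal_clique_def by (rule conjunct2)
  then show ?thesis using assms(2-7) by fast
qed

lemma journey_three:
  assumes "a \<in> V" "b \<in> V" "c \<in> V" "a \<noteq> b" "b \<noteq> c" "lam {a,b} < lam {b,c}"
  shows "journey V lam [a,b,c] a c"
proof -
  have "p ! i \<noteq> p ! Suc i" if "Suc i < length p" "p = [a,b,c]" for p i
    using that assms(4,5) by (cases i) (auto simp: less_Suc_eq)
  moreover have "lam {p ! i, p ! Suc i} < lam {p ! Suc i, p ! Suc (Suc i)}"
    if "Suc (Suc i) < length p" "p = [a,b,c]" for p i
    using that assms(6) by (cases i) auto
  ultimately show ?thesis unfolding journey_def using assms(1-3) by auto
qed

lemma journey_through_e_minus:
  assumes "simple_temporal_clique V lam" "u \<in> V" "v \<in> V" "u \<noteq> v" "{u,v} = e_minus V lam v"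
    and "x \<in> V" "x \<notin> {u,v}"
  shows "journey V lam [u,v,x] u x" "first_edge [u,v,x] = {u,v}"
proof -
  have "lam {v,u} \<le> lam {v,x}" using e_minus_label_le[of u V v lam x] assms by blast
  moreover have "lam {v,u} \<noteq> lam {v,x}"
    using simple_temporal_clique_labels_distinct[of V lam v u x] assms by blast
  ultimately have "lam {v,u} < lam {v,x}" by simp
  then show "journey V lam [u,v,x] u x"
    using journey_three[of u V v x lam] assms by (auto simp: insert_commute)
  show "first_edge [u,v,x] = {u,v}" by (simp add: first_edge_def)
qed

lemma journey_through_e_plus:
  assumes "simple_temporal_clique V lam" "u \<in> V" "w \<in> V" "u \<noteq> w" "{u,w} = e_plus V lam w"
    and "x \<in> V" "x \<notin> {u,w}"
  shows "journey V lam [x,w,u] x u" "last_edge [x,w,u] = {w,u}"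
proof -
  have "finite V" using assms(1) unfolding simple_temporal_clique_def by simp
  then have "lam {w,x} \<le> lam {w,u}" using e_plus_label_ge[of V u w lam x] assms by blast
  moreover have "lam {w,u} \<noteq> lam {w,x}"
    using simple_temporal_clique_labels_distinct[of V lam w u x] assms by blast
  ultimately have "lam {w,x} < lam {w,u}" by simp
  then show "journey V lam [x,w,u] x u"
    using journey_three[of x V w u lam] assms by (auto simp: insert_commute)
  show "last_edge [x,w,u] = {w,u}" by (simp add: last_edge_def)
qed

theorem lemma1:
  fixes V :: "'v set" and lam :: "'v set \<Rightarrow> nat"
  assumes "simple_temporal_clique V lam"
  shows "(\<forall>u\<in>V. \<forall>v\<in>V. u \<noteq> v \<and> {u,v} = e_minus V lam v \<longrightarrow>
            (\<forall>x\<in>V. x \<notin> {u,v} \<longrightarrow>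
               (\<exists>p. journey V lam p u x \<and> first_edge p = {u,v})))
       \<and> (\<forall>u\<in>V. \<forall>w\<in>V. u \<noteq> w \<and> {u,w} = e_plus V lam w \<longrightarrow>
            (\<forall>x\<in>V. x \<notin> {u,w} \<longrightarrow>
               (\<exists>p. journey V lam p x u \<and> last_edge p = {w,u})))"
proof (intro conjI ballI impI)
  fix u v x
  assume "u \<in> V" "v \<in> V" "u \<noteq> v \<and> {u,v} = e_minus V lam v" "x \<in> V" "x \<notin> {u,v}"
  then show "\<exists>p. journey V lam p u x \<and> first_edge p = {u,v}"
    using journey_through_e_minus[OF assms, of u v x] by blast
next
  fix u w x
  assume "u \<in> V" "w \<in> V" "u \<noteq> w \<and> {u,w} = e_plus V lam w" "x \<in> V" "x \<notin> {u,w}"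
  then show "\<exists>p. journey V lam p x u \<and> last_edge p = {w,u}"
    using journey_through_e_plus[OF assms, of u w x] by blast
qed

end
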